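(* Let $n\ge2$, $I\subset\mathbb{R}$ a compact interval, $\gamma\colon I\to\mathbb{R}^n$ a smooth curve with $|\det(\gamma'(s),\dots,\gamma^{(n)}(s))|\ge c_0>0$ on $I$, and $\chi\in C^\infty(\mathbb{R})$ non-negative, not identically zero, supported in the interior of $I$. Let $M_\gamma f(x):=\sup_{t>0}|\int f(x-t\gamma(s))\chi(s)\,\mathrm{d}s|$. Then $\|M_\gamma\|_{L^p(\mathbb{R}^n)\to L^p(\mathbb{R}^n)}=\infty$ for every $1\le p\le n$. *)

theory Defs
  imports "HOL-Analysis.Analysis"
begin

definition curve_deriv :: "nat \<Rightarrow> (real \<Rightarrow> real^'n) \<Rightarrow> real \<Rightarrow> real^'n" where
  "curve_deriv k \<gamma> s = (\<chi> i. (deriv ^^ k) (\<lambda>t. \<gamma> t $ i) s)"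

text \<open>A fixed enumeration of the coordinate index type by 1..n
  (the absolute value of the determinant below does not depend on this choice).\<close>
definition col_order :: "'n::finite \<Rightarrow> nat" where
  "col_order = (SOME e. bij_betw e (UNIV::'n set) {1..CARD('n)})"

definition torsion_det :: "(real \<Rightarrow> real^'n::finite) \<Rightarrow> real \<Rightarrow> real" where
  "torsion_det \<gamma> s = det (\<chi> i j. curve_deriv (col_order j) \<gamma> s $ i)"

definition curve_maximal ::
  "(real \<Rightarrow> real^'n) \<Rightarrow> (real \<Rightarrow> real) \<Rightarrow> (real^'n \<Rightarrow> real) \<Rightarrow> real^'n \<Rightarrow> ennreal" where
  "curve_maximal \<gamma> \<chi>' f x =
     (SUP t\<in>{0<..}. ennreal \<bar>LINT s|lborel. f (x - t *\<^sub>R \<gamma> s) * \<chi>' s\<bar>)"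

definition enn_powr :: "ennreal \<Rightarrow> real \<Rightarrow> ennreal" where
  "enn_powr x p = (if x = \<infinity> then \<infinity> else ennreal (enn2real x powr p))"

end

theory Submission
  imports Defs
begin

(* Nondegeneracy prevents gamma(s) from lying in the span of gamma'(s), ..., gamma^(n-1)(s) on a
   whole interval where chi is positive. So at some s0, in the frame (gamma'(s0), ..., gamma^(n)(s0)),
   the coordinate of gamma(s0) along gamma^(n)(s0) is some alpha /= 0, and by Taylor's formula this
   coordinate of gamma(s) is alpha + O(|s - s0|^n), the lower derivatives having vanishing
   coordinate. For x in a small ball, with t in (1,2) matching the coordinate of x to t alpha, the
   point x - t gamma(s) then lies in a slab of width ~ 2^(-n k) whenever |s - s0| <= 2^(-k).
   Testing the maximal inequality on f_N = sum (k <= N) 2^k 1_(slab_k) yields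
   N^p <~ sum (k <= N) 2^(k (p - n)), which fails for p <= n. *)

lemma col_order_bij: "bij_betw (col_order :: 'n::finite \<Rightarrow> nat) UNIV {1..CARD('n)}"
proof -
  have "\<exists>e. bij_betw (e::'n \<Rightarrow> nat) UNIV {1..CARD('n)}"
    by (rule finite_same_card_bij) auto
  then show ?thesis unfolding col_order_def by (rule someI_ex)
qed

definition deriv_frame :: "('n::finite \<Rightarrow> nat) \<Rightarrow> (real \<Rightarrow> real^'n) \<Rightarrow> real \<Rightarrow> real^'n^'n" where
  "deriv_frame ord \<gamma> s = (\<chi> i j. curve_deriv (ord j) \<gamma> s $ i)"

lemma torsion_det_eq: "torsion_det \<gamma> s = det (deriv_frame col_order \<gamma> s)"
  by (simp add: torsion_det_def deriv_frame_def)

lemma deriv_frame_mult_axis: "deriv_frame ord \<gamma> s *v axis j 1 = curve_deriv (ord j) \<gamma> s"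
  by (simp add: matrix_vector_mult_basis column_def deriv_frame_def vec_eq_iff)

lemma deriv_frame_mult_component:
  assumes "bij_betw ord UNIV {1..CARD('n::finite)}"
  shows "(deriv_frame ord \<gamma> s *v c) $ i = (\<Sum>k\<in>{1..CARD('n)}. c $ inv_into UNIV ord k * curve_deriv k \<gamma> s $ i)"
proof -
  have "(deriv_frame ord \<gamma> s *v c) $ i = (\<Sum>j\<in>UNIV. c $ inv_into UNIV ord (ord j) * curve_deriv (ord j) \<gamma> s $ i)"
    using bij_betw_imp_inj_on[OF assms]
    by (simp add: matrix_vector_mult_def deriv_frame_def mult.commute)
  also have "\<dots> = (\<Sum>k\<in>{1..CARD('n)}. c $ inv_into UNIV ord k * curve_deriv k \<gamma> s $ i)"
    using sum.reindex_bij_betw[OF assms, of "\<lambda>k. c $ inv_into UNIV ord k * curve_deriv k \<gamma> s $ i"] by simp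
  finally show ?thesis .
qed

lemma matrix_inv_mult:
  fixes A :: "'a::semiring_1^'n^'n"
  assumes "invertible A"
  shows "A ** matrix_inv A = mat 1" "matrix_inv A ** A = mat 1"
  using someI_ex[OF assms[unfolded invertible_def]] unfolding matrix_inv_def by auto

lemma invertible_matrix_inv:
  fixes A :: "'a::semiring_1^'n^'n"
  assumes "invertible A"
  shows "invertible (matrix_inv A)"
  using matrix_inv_mult[OF assms] unfolding invertible_def by blast

lemma deriv_frame_independent:
  assumes ord: "bij_betw ord UNIV {1..CARD('n::finite)}"
    and det: "det (deriv_frame ord \<gamma> s) \<noteq> 0"
    and zero: "\<And>i. (\<Sum>k\<in>{1..CARD('n)}. d k * curve_deriv k \<gamma> s $ i) = 0"
    and k: "k \<in> {1..CARD('n)}"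
  shows "d k = 0"
proof -
  define c where "c = (\<chi> j. d (ord j))"
  have "(deriv_frame ord \<gamma> s *v c) $ i = 0" for i
    using zero[of i] deriv_frame_mult_component[OF ord, of \<gamma> s c i] ord
    by (simp add: c_def f_inv_into_f bij_betw_def)
  then have "deriv_frame ord \<gamma> s *v c = 0"
    by (simp add: vec_eq_iff)
  moreover have "\<forall>x. deriv_frame ord \<gamma> s *v x = 0 \<longrightarrow> x = 0"
    using det by (simp add: invertible_det_nz[symmetric] invertible_left_inverse matrix_left_invertible_ker[symmetric])
  ultimately have "c = 0" by blast
  moreover obtain j where "ord j = k"
    using ord k unfolding bij_betw_def by (metis imageE)
  ultimately show ?thesis by (auto simp: c_def vec_eq_iff)
qed

lemma curve_deriv_0 [simp]: "curve_deriv 0 \<gamma> s = \<gamma> s"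
  by (simp add: curve_deriv_def vec_eq_iff)

lemma curve_deriv_has_real_derivative:
  assumes smooth: "\<forall>k i. \<forall>x\<in>U. ((deriv ^^ k) (\<lambda>t. \<gamma> t $ i)) differentiable (at x)" and "s \<in> U"
  shows "((\<lambda>t. curve_deriv k \<gamma> t $ i) has_real_derivative curve_deriv (Suc k) \<gamma> s $ i) (at s)"
proof -
  have "(deriv ^^ k) (\<lambda>t. \<gamma> t $ i) differentiable (at s)" using assms by blast
  then show ?thesis by (simp add: curve_deriv_def DERIV_deriv_iff_real_differentiable)
qed

lemma continuous_on_curve:
  fixes \<gamma> :: "real \<Rightarrow> real^'n"
  assumes "\<forall>k i. \<forall>x\<in>U. ((deriv ^^ k) (\<lambda>t. \<gamma> t $ i)) differentiable (at x)"
  shows "continuous_on U \<gamma>"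
proof -
  have "(\<lambda>t. \<gamma> t $ i) differentiable (at x)" if "x \<in> U" for i x
    using bspec[OF spec[OF spec[OF assms, of 0], of i] that] by simp
  then have "continuous_on U (\<lambda>s. \<chi> i. \<gamma> s $ i)"
    by (intro continuous_on_vec_lambda continuous_at_imp_continuous_on ballI differentiable_imp_continuous_within)
  then show ?thesis by simp
qed

lemma differentiable_det:
  fixes M :: "real \<Rightarrow> real^'n^'n"
  assumes "\<And>i j. (\<lambda>s. M s $ i $ j) differentiable (at x)"
  shows "(\<lambda>s. det (M s)) differentiable (at x)"
proof -
  have prod: "(\<lambda>s. \<Prod>i\<in>UNIV. M s $ i $ q i) differentiable (at x)" for q :: "'n \<Rightarrow> 'n"
  proof -
    have "\<forall>i. \<exists>D. ((\<lambda>s. M s $ i $ q i) has_derivative D) (at x)"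
      using assms unfolding differentiable_def by blast
    then obtain D where "\<And>i. ((\<lambda>s. M s $ i $ q i) has_derivative D i) (at x)"
      by metis
    then show ?thesis
      unfolding differentiable_def using has_derivative_prod[of UNIV "\<lambda>i s. M s $ i $ q i" D] by blast
  qed
  then show ?thesis
    unfolding det_def
    by (intro differentiable_sum ballI differentiable_mult differentiable_const prod finite_permutations) simp
qed

lemma coefficient_chain_contradiction:
  fixes \<beta> :: "nat \<Rightarrow> real \<Rightarrow> real"
  assumes J: "open J" "s \<in> J" and n: "n \<ge> 1"
    and top: "\<forall>t\<in>J. \<beta> n t = 0"
    and ode: "\<And>t k. t \<in> J \<Longrightarrow> k \<in> {1..n} \<Longrightarrow>
      deriv (\<beta> k) t + (if 2 \<le> k then \<beta> (k - 1) t else 0) = (if k = 1 then 1 else 0)"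
  shows False
proof -
  have deriv_vanishes: "deriv (\<beta> k) t = 0" if "\<forall>t\<in>J. \<beta> k t = 0" "t \<in> J" for k t
  proof -
    have "(\<beta> k has_real_derivative 0) (at t)"
      by (rule has_field_derivative_transform_within_open[of "\<lambda>_. 0" _ _ J]) (use that J in auto)
    then show ?thesis by (rule DERIV_imp_deriv)
  qed
  have "\<forall>t\<in>J. \<beta> (n - m) t = 0" if "m < n" for m
    using that
  proof (induction m)
    case 0
    then show ?case using top by simp
  next
    case (Suc m)
    have "\<beta> (n - Suc m) t = 0" if "t \<in> J" for t
    proof -
      have "2 \<le> n - m" "n - m \<noteq> 1" "n - m - 1 = n - Suc m" using Suc.prems by auto
      then show ?thesis
        using ode[OF that, of "n - m"] deriv_vanishes[of "n - m" t] Suc that by auto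
    qed
    then show ?case by blast
  qed
  from this[of "n - 1"] n have "\<forall>t\<in>J. \<beta> 1 t = 0" by simp
  with ode[OF J(2), of 1] deriv_vanishes[of 1 s] J n show False by simp
qed

lemma deriv_frame_expansion_derivative:
  fixes \<gamma> :: "real \<Rightarrow> real^'n" and \<beta> :: "nat \<Rightarrow> real \<Rightarrow> real"
  assumes J: "open J" "J \<subseteq> U"
    and smooth: "\<forall>k i. \<forall>x\<in>U. ((deriv ^^ k) (\<lambda>t. \<gamma> t $ i)) differentiable (at x)"
    and rep: "\<And>t i. t \<in> J \<Longrightarrow> \<gamma> t $ i = (\<Sum>k\<in>{1..CARD('n)}. \<beta> k t * curve_deriv k \<gamma> t $ i)"
    and diff: "\<And>k t. t \<in> J \<Longrightarrow> \<beta> k differentiable (at t)"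
    and s: "s \<in> J"
  shows "curve_deriv 1 \<gamma> s $ i = (\<Sum>k\<in>{1..CARD('n)}. deriv (\<beta> k) s * curve_deriv k \<gamma> s $ i)
    + (\<Sum>k\<in>{1..CARD('n)}. \<beta> k s * curve_deriv (Suc k) \<gamma> s $ i)"
proof -
  let ?D = "\<lambda>k t. curve_deriv k \<gamma> t"
  have sU: "s \<in> U" using s J by blast
  have "((\<lambda>t. \<Sum>k\<in>{1..CARD('n)}. \<beta> k t * ?D k t $ i) has_real_derivative
      (\<Sum>k\<in>{1..CARD('n)}. deriv (\<beta> k) s * ?D k s $ i + ?D (Suc k) s $ i * \<beta> k s)) (at s)"
    using diff[OF s] DERIV_deriv_iff_real_differentiable
    by (intro DERIV_sum DERIV_mult curve_deriv_has_real_derivative[OF smooth sU]) blast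
  then have "((\<lambda>t. \<gamma> t $ i) has_real_derivative
      (\<Sum>k\<in>{1..CARD('n)}. deriv (\<beta> k) s * ?D k s $ i + ?D (Suc k) s $ i * \<beta> k s)) (at s)"
    by (rule has_field_derivative_transform_within_open[OF _ J(1) s]) (simp add: rep)
  moreover have "((\<lambda>t. \<gamma> t $ i) has_real_derivative ?D 1 s $ i) (at s)"
    using curve_deriv_has_real_derivative[OF smooth sU, of 0] by simp
  ultimately show ?thesis
    by (simp add: DERIV_unique sum.distrib mult.commute)
qed

lemma deriv_frame_coefficient_ode:
  fixes \<gamma> :: "real \<Rightarrow> real^'n" and \<beta> :: "nat \<Rightarrow> real \<Rightarrow> real"
  assumes ord: "bij_betw ord UNIV {1..CARD('n)}"
    and J: "open J" "J \<subseteq> U"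
    and smooth: "\<forall>k i. \<forall>x\<in>U. ((deriv ^^ k) (\<lambda>t. \<gamma> t $ i)) differentiable (at x)"
    and det: "\<forall>t\<in>J. det (deriv_frame ord \<gamma> t) \<noteq> 0"
    and rep: "\<And>t i. t \<in> J \<Longrightarrow> \<gamma> t $ i = (\<Sum>k\<in>{1..CARD('n)}. \<beta> k t * curve_deriv k \<gamma> t $ i)"
    and top: "\<forall>t\<in>J. \<beta> CARD('n) t = 0"
    and diff: "\<And>k t. t \<in> J \<Longrightarrow> \<beta> k differentiable (at t)"
    and s: "s \<in> J" and k: "k \<in> {1..CARD('n)}"
  shows "deriv (\<beta> k) s + (if 2 \<le> k then \<beta> (k - 1) s else 0) = (if k = 1 then 1 else 0)"
proof -
  let ?n = "CARD('n)"
  let ?D = "\<lambda>k t. curve_deriv k \<gamma> t"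
  define d where "d k = deriv (\<beta> k) s + (if 2 \<le> k then \<beta> (k - 1) s else 0) - (if k = 1 then 1 else 0)" for k
  obtain m where m: "?n = Suc m" using zero_less_card_finite[where 'a='n] gr0_conv_Suc by blast
  have "(\<Sum>k\<in>{1..?n}. d k * ?D k s $ i) = 0" for i
  proof -
    have shift: "(\<Sum>k\<in>{1..Suc m}. (if 2 \<le> k then \<beta> (k - 1) s else 0) * ?D k s $ i)
        = (\<Sum>k\<in>{1..m}. \<beta> k s * ?D (Suc k) s $ i)"
      by (induction m) auto
    have "(\<Sum>k\<in>{1..?n}. \<beta> k s * ?D (Suc k) s $ i) = (\<Sum>k\<in>{1..m}. \<beta> k s * ?D (Suc k) s $ i)"
      using top s by (simp add: m sum.cl_ivl_Suc)
    moreover have "(\<Sum>k\<in>{1..?n}. (if k = 1 then 1 else 0) * ?D k s $ i) = ?D 1 s $ i"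
      using m by (simp add: of_bool_def[symmetric])
    ultimately show ?thesis
      using deriv_frame_expansion_derivative[OF J smooth rep diff s, of i] shift
      by (simp add: d_def algebra_simps sum.distrib sum_subtractf m)
  qed
  then have "d k = 0"
    by (rule deriv_frame_independent[OF ord det[rule_format, OF s] _ k])
  then show ?thesis by (simp add: d_def)
qed

lemma differentiable_cramer_coefficient:
  fixes \<gamma> :: "real \<Rightarrow> real^'n"
  assumes smooth: "\<forall>k i. \<forall>x\<in>U. ((deriv ^^ k) (\<lambda>t. \<gamma> t $ i)) differentiable (at x)"
    and t: "t \<in> U" and det: "det (deriv_frame ord \<gamma> t) \<noteq> 0"
  shows "(\<lambda>s. det (\<chi> i l. if l = j then \<gamma> s $ i else deriv_frame ord \<gamma> s $ i $ l) / det (deriv_frame ord \<gamma> s))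
    differentiable (at t)"
proof -
  have entries: "(\<lambda>s. curve_deriv l \<gamma> s $ i) differentiable (at t)" for l i
    using smooth t by (auto simp: curve_deriv_def)
  have "(\<lambda>s. (\<chi> i l. if l = j then \<gamma> s $ i else deriv_frame ord \<gamma> s $ i $ l) $ i $ l) differentiable (at t)"
    for i l
    using entries[of 0 i] by (cases "l = j") (simp_all add: deriv_frame_def entries)
  then show ?thesis
    using det by (intro differentiable_divide differentiable_det) (auto simp: deriv_frame_def entries)
qed

(* If gamma stayed in the span of gamma', ..., gamma^(n-1) on J, its coefficients beta_k in the
   frame would satisfy beta_n = 0, beta_1' = 1 and beta_k' = - beta_(k-1): all of them would vanish. *)
lemma exists_top_frame_coordinate_nonzero:
  fixes \<gamma> :: "real \<Rightarrow> real^'n"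
  assumes ord: "bij_betw ord UNIV {1..CARD('n)}" and k0: "ord k0 = CARD('n)"
    and J: "open J" "J \<noteq> {}" "J \<subseteq> U"
    and smooth: "\<forall>k i. \<forall>x\<in>U. ((deriv ^^ k) (\<lambda>t. \<gamma> t $ i)) differentiable (at x)"
    and det: "\<forall>s\<in>J. det (deriv_frame ord \<gamma> s) \<noteq> 0"
  shows "\<exists>s\<in>J. (matrix_inv (deriv_frame ord \<gamma> s) *v \<gamma> s) $ k0 \<noteq> 0"
proof (rule ccontr)
  assume "\<not> ?thesis"
  then have vanish: "\<forall>s\<in>J. (matrix_inv (deriv_frame ord \<gamma> s) *v \<gamma> s) $ k0 = 0" by blast
  let ?n = "CARD('n)"
  let ?G = "deriv_frame ord \<gamma>"
  define cramer_coeff where "cramer_coeff s j =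
    det (\<chi> i l. if l = j then \<gamma> s $ i else ?G s $ i $ l) / det (?G s)" for s j
  define \<beta> where "\<beta> k s = cramer_coeff s (inv_into UNIV ord k)" for k s
  have solves: "?G s *v (\<chi> j. cramer_coeff s j) = \<gamma> s" if "s \<in> J" for s
    using cramer[OF det[rule_format, OF that]] by (simp add: cramer_coeff_def)
  have rep: "\<gamma> t $ i = (\<Sum>k\<in>{1..?n}. \<beta> k t * curve_deriv k \<gamma> t $ i)" if "t \<in> J" for t i
    using deriv_frame_mult_component[OF ord, of \<gamma> t "\<chi> j. cramer_coeff t j" i] solves[OF that]
    by (simp add: \<beta>_def)
  have top: "\<forall>t\<in>J. \<beta> ?n t = 0"
  proof
    fix t assume t: "t \<in> J"
    have "invertible (?G t)" using det t by (simp add: invertible_det_nz)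
    then have "matrix_inv (?G t) *v \<gamma> t = (\<chi> j. cramer_coeff t j)"
      using solves[OF t] by (metis matrix_inv_mult(2) matrix_vector_mul_assoc matrix_vector_mul_lid)
    moreover have "inv_into UNIV ord ?n = k0"
      using k0 bij_betw_imp_inj_on[OF ord] by (metis inv_f_f)
    ultimately show "\<beta> ?n t = 0" using vanish[rule_format, OF t] by (simp add: \<beta>_def)
  qed
  have diff: "\<beta> k differentiable (at t)" if "t \<in> J" for k t
    unfolding \<beta>_def cramer_coeff_def
    using differentiable_cramer_coefficient[OF smooth _ det[rule_format, OF that]] that J(3) by blast
  obtain s where s: "s \<in> J" using J(2) by blast
  have npos: "?n \<ge> 1" using zero_less_card_finite[where 'a='n] by linarith
  show False
    using coefficient_chain_contradiction[OF J(1) s npos top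
        deriv_frame_coefficient_ode[OF ord J(1,3) smooth det rep top diff]] .
qed

lemma taylor_remainder_bound:
  fixes g :: "real \<Rightarrow> real"
  assumes smooth: "\<forall>k. \<forall>x\<in>U. (deriv ^^ k) g differentiable (at x)"
    and sub: "cball s0 r \<subseteq> U" and n: "0 < n"
  obtains K where "K \<ge> 0"
    "\<And>s. s \<in> cball s0 r \<Longrightarrow> \<bar>g s - (\<Sum>m<n. (deriv ^^ m) g s0 / fact m * (s - s0)^m)\<bar> \<le> K * \<bar>s - s0\<bar>^n"
proof -
  have "continuous_on (cball s0 r) ((deriv ^^ n) g)"
    using smooth sub by (intro continuous_at_imp_continuous_on ballI differentiable_imp_continuous_within) auto
  then have "compact ((deriv ^^ n) g ` cball s0 r)" by (intro compact_continuous_image) auto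
  then obtain K0 where K0: "\<And>t. t \<in> cball s0 r \<Longrightarrow> \<bar>(deriv ^^ n) g t\<bar> \<le> K0"
    by (metis compact_imp_bounded bounded_iff imageI real_norm_def)
  define K where "K = max K0 0 / fact n"
  have "\<bar>g s - (\<Sum>m<n. (deriv ^^ m) g s0 / fact m * (s - s0)^m)\<bar> \<le> K * \<bar>s - s0\<bar>^n"
    if s: "s \<in> cball s0 r" for s
  proof (cases "s = s0")
    case True
    obtain n' where "n = Suc n'" using n gr0_conv_Suc by blast
    then show ?thesis using True by (simp add: sum.lessThan_Suc_shift)
  next
    case False
    have sr: "\<bar>s - s0\<bar> \<le> r" using s by (simp add: dist_real_def abs_minus_commute)
    have derivs: "\<forall>m t. m < n \<and> s0 - r \<le> t \<and> t \<le> s0 + r \<longrightarrow>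
        ((deriv ^^ m) g has_real_derivative (deriv ^^ Suc m) g t) (at t)"
    proof (intro allI impI)
      fix m t assume "m < n \<and> s0 - r \<le> t \<and> t \<le> s0 + r"
      then have "t \<in> U" using sub by (auto simp: dist_real_def)
      then show "((deriv ^^ m) g has_real_derivative (deriv ^^ Suc m) g t) (at t)"
        using smooth DERIV_deriv_iff_real_differentiable by auto
    qed
    obtain t where t: "if s < s0 then s < t \<and> t < s0 else s0 < t \<and> t < s"
      and eq: "g s = (\<Sum>m<n. (deriv ^^ m) g s0 / fact m * (s - s0)^m) + (deriv ^^ n) g t / fact n * (s - s0)^n"
      using Taylor[OF n funpow_0 derivs, of s0 s] sr False by (auto simp: abs_le_iff)
    have "t \<in> cball s0 r" using t sr by (auto simp: dist_real_def split: if_splits)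
    then have "\<bar>(deriv ^^ n) g t\<bar> \<le> max K0 0" using K0 by force
    then have "\<bar>(deriv ^^ n) g t / fact n * (s - s0)^n\<bar> \<le> max K0 0 / fact n * \<bar>s - s0\<bar>^n"
      by (simp add: abs_mult power_abs divide_right_mono mult_right_mono)
    then show ?thesis using eq by (simp add: K_def)
  qed
  moreover have "K \<ge> 0" by (simp add: K_def)
  ultimately show ?thesis using that by blast
qed

definition taylor_poly :: "(real \<Rightarrow> real^'n) \<Rightarrow> nat \<Rightarrow> real \<Rightarrow> real \<Rightarrow> real^'n" where
  "taylor_poly \<gamma> n s0 s = (\<Sum>m<n. ((s - s0) ^ m / fact m) *\<^sub>R curve_deriv m \<gamma> s0)"

lemma curve_taylor_remainder_bound:
  fixes \<gamma> :: "real \<Rightarrow> real^'n"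
  assumes smooth: "\<forall>k i. \<forall>x\<in>U. ((deriv ^^ k) (\<lambda>t. \<gamma> t $ i)) differentiable (at x)"
    and sub: "cball s0 r \<subseteq> U" and n: "0 < n"
  obtains K where "K \<ge> 0"
    "\<And>s. s \<in> cball s0 r \<Longrightarrow> norm (\<gamma> s - taylor_poly \<gamma> n s0 s) \<le> K * \<bar>s - s0\<bar> ^ n"
proof -
  have "\<forall>j. \<exists>K\<ge>0. \<forall>s\<in>cball s0 r. \<bar>(\<gamma> s - taylor_poly \<gamma> n s0 s) $ j\<bar> \<le> K * \<bar>s - s0\<bar> ^ n"
  proof
    fix j
    obtain K where "K \<ge> 0" "\<And>s. s \<in> cball s0 r \<Longrightarrow>
        \<bar>\<gamma> s $ j - (\<Sum>m<n. (deriv ^^ m) (\<lambda>t. \<gamma> t $ j) s0 / fact m * (s - s0) ^ m)\<bar> \<le> K * \<bar>s - s0\<bar> ^ n"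
      using taylor_remainder_bound[of U "\<lambda>t. \<gamma> t $ j" s0 r n] smooth sub n by auto
    then show "\<exists>K\<ge>0. \<forall>s\<in>cball s0 r. \<bar>(\<gamma> s - taylor_poly \<gamma> n s0 s) $ j\<bar> \<le> K * \<bar>s - s0\<bar> ^ n"
      by (auto simp: taylor_poly_def curve_deriv_def sum_component mult_ac)
  qed
  then obtain Kc where Kc: "\<forall>j. Kc j \<ge> 0 \<and>
      (\<forall>s\<in>cball s0 r. \<bar>(\<gamma> s - taylor_poly \<gamma> n s0 s) $ j\<bar> \<le> Kc j * \<bar>s - s0\<bar> ^ n)"
    by (metis choice)
  have "norm (\<gamma> s - taylor_poly \<gamma> n s0 s) \<le> (\<Sum>j\<in>UNIV. Kc j) * \<bar>s - s0\<bar> ^ n"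
    if "s \<in> cball s0 r" for s
    using norm_le_l1_cart[of "\<gamma> s - taylor_poly \<gamma> n s0 s"] Kc that
    by (auto simp: sum_distrib_right intro: order_trans[OF _ sum_mono])
  moreover have "(\<Sum>j\<in>UNIV. Kc j) \<ge> 0" using Kc by (intro sum_nonneg) auto
  ultimately show ?thesis using that by blast
qed

lemma frame_taylor_poly_top_coordinate:
  fixes \<gamma> :: "real \<Rightarrow> real^'n"
  assumes ord: "bij_betw ord UNIV {1..CARD('n)}" and k0: "ord k0 = CARD('n)"
    and B: "B ** deriv_frame ord \<gamma> s0 = mat 1"
  shows "(B *v taylor_poly \<gamma> CARD('n) s0 s) $ k0 = (B *v \<gamma> s0) $ k0"
proof -
  have lower_derivs_vanish: "(B *v curve_deriv m \<gamma> s0) $ k0 = 0" if "1 \<le> m" "m < CARD('n)" for m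
  proof -
    have "m \<in> ord ` UNIV" using ord that by (simp add: bij_betw_def)
    then obtain j where j: "ord j = m" by blast
    have "B *v curve_deriv m \<gamma> s0 = B *v (deriv_frame ord \<gamma> s0 *v axis j 1)"
      by (simp add: deriv_frame_mult_axis j)
    also have "\<dots> = axis j 1" by (simp add: matrix_vector_mul_assoc B)
    finally show ?thesis using j k0 that by (auto simp: axis_def)
  qed
  have "(B *v taylor_poly \<gamma> CARD('n) s0 s) $ k0
      = (\<Sum>m<CARD('n). (s - s0) ^ m / fact m * (B *v curve_deriv m \<gamma> s0) $ k0)"
    by (simp add: taylor_poly_def linear_sum[OF matrix_vector_mul_linear] o_def
        matrix_vector_mult_scaleR sum_component)
  also have "\<dots> = (\<Sum>m<CARD('n). if m = 0 then (B *v \<gamma> s0) $ k0 else 0)"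
    using lower_derivs_vanish by (intro sum.cong) auto
  finally show ?thesis by simp
qed

lemma frame_top_coordinate_flat:
  fixes \<gamma> :: "real \<Rightarrow> real^'n"
  assumes ord: "bij_betw ord UNIV {1..CARD('n)}" and k0: "ord k0 = CARD('n)"
    and smooth: "\<forall>k i. \<forall>x\<in>U. ((deriv ^^ k) (\<lambda>t. \<gamma> t $ i)) differentiable (at x)"
    and sub: "cball s0 r \<subseteq> U"
    and B: "B ** deriv_frame ord \<gamma> s0 = mat 1"
  obtains K where "K \<ge> 0"
    "\<And>s. s \<in> cball s0 r \<Longrightarrow> \<bar>(B *v \<gamma> s) $ k0 - (B *v \<gamma> s0) $ k0\<bar> \<le> K * \<bar>s - s0\<bar> ^ CARD('n)"
proof -
  obtain K where K: "K \<ge> 0"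
    "\<And>s. s \<in> cball s0 r \<Longrightarrow> norm (\<gamma> s - taylor_poly \<gamma> CARD('n) s0 s) \<le> K * \<bar>s - s0\<bar> ^ CARD('n)"
    using curve_taylor_remainder_bound[OF smooth sub zero_less_card_finite] by blast
  obtain L where L: "L > 0" "\<And>h. norm (B *v h) \<le> norm h * L"
    using bounded_linear.pos_bounded[OF matrix_vector_mul_bounded_linear[of B]] by blast
  have "\<bar>(B *v \<gamma> s) $ k0 - (B *v \<gamma> s0) $ k0\<bar> \<le> (K * L) * \<bar>s - s0\<bar> ^ CARD('n)"
    if s: "s \<in> cball s0 r" for s
  proof -
    have "\<bar>(B *v \<gamma> s) $ k0 - (B *v \<gamma> s0) $ k0\<bar> = \<bar>(B *v (\<gamma> s - taylor_poly \<gamma> CARD('n) s0 s)) $ k0\<bar>"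
      by (simp add: matrix_vector_mult_diff_distrib frame_taylor_poly_top_coordinate[OF ord k0 B])
    also have "\<dots> \<le> norm (\<gamma> s - taylor_poly \<gamma> CARD('n) s0 s) * L"
      using component_le_norm_cart L(2) order_trans by blast
    also have "\<dots> \<le> (K * \<bar>s - s0\<bar> ^ CARD('n)) * L"
      using K(2)[OF s] L(1) by (intro mult_right_mono) auto
    finally show ?thesis by (simp add: mult_ac)
  qed
  moreover have "K * L \<ge> 0" using K(1) L(1) by simp
  ultimately show ?thesis using that by blast
qed

definition slab :: "real^'n^'n \<Rightarrow> 'n \<Rightarrow> real \<Rightarrow> real \<Rightarrow> real \<Rightarrow> (real^'n) set" where
  "slab B k R c w =
    {y. (\<forall>i. i \<noteq> k \<longrightarrow> \<bar>(B *v y) $ i\<bar> \<le> R) \<and> c \<le> (B *v y) $ k \<and> (B *v y) $ k < c + w}"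

lemma slab_borel [measurable]:
  fixes B :: "real^'n^'n"
  shows "slab B k R c w \<in> sets borel"
proof -
  have [measurable]: "(\<lambda>y. (B *v y) $ i) \<in> borel_measurable borel" for i
    by (intro borel_measurable_continuous_onI) (simp add: matrix_vector_mult_def continuous_intros)
  show ?thesis unfolding slab_def by measurable
qed

lemma emeasure_slab_translate:
  fixes B :: "real^'n^'n"
  assumes "invertible B"
  shows "emeasure lborel (slab B k R c w) = emeasure lborel (slab B k R 0 w)"
proof -
  define v where "v = matrix_inv B *v axis k 1"
  have v: "B *v v = axis k 1"
    by (simp add: v_def matrix_vector_mul_assoc matrix_inv_mult[OF assms])
  have "B *v (- (c *\<^sub>R v) + y) = B *v y - c *\<^sub>R axis k 1" for y
    by (simp add: matrix_vector_mult_diff_distrib matrix_vector_mult_scaleR v[symmetric])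
  then have eq: "(+) (- (c *\<^sub>R v)) -` slab B k R 0 w = slab B k R c w"
    by (auto simp: slab_def axis_def)
  have "emeasure lborel (slab B k R 0 w) = emeasure (distr lborel borel ((+) (- (c *\<^sub>R v)))) (slab B k R 0 w)"
    by (simp add: lborel_distr_plus)
  also have "\<dots> = emeasure lborel (slab B k R c w)"
    by (subst emeasure_distr) (auto simp: eq)
  finally show ?thesis by simp
qed

lemma emeasure_slab_packing:
  fixes B :: "real^'n^'n" and M :: nat
  assumes B: "invertible B" and M: "M > 0"
  shows "of_nat M * emeasure lborel (slab B k R c (1 / M)) \<le> emeasure lborel (slab B k R 0 1)"
proof -
  define F where "F q = slab B k R (real q / M) (1 / M)" for q
  have "disjoint_family_on F {..<M}"
  proof (unfold disjoint_family_on_def, intro ballI impI)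
    fix q q' assume "q \<in> {..<M}" "q' \<in> {..<M}" "q \<noteq> q'"
    have False if "y \<in> F q" "y \<in> F q'" for y
    proof -
      have "real q / M < real q' / M + 1 / M" "real q' / M < real q / M + 1 / M"
        using that by (auto simp: F_def slab_def)
      then have "real q < real q' + 1" "real q' < real q + 1"
        using M by (simp_all add: field_simps)
      then show False using \<open>q \<noteq> q'\<close> by linarith
    qed
    then show "F q \<inter> F q' = {}" by blast
  qed
  moreover have "F ` {..<M} \<subseteq> sets lborel" by (auto simp: F_def)
  ultimately have "(\<Sum>q<M. emeasure lborel (F q)) = emeasure lborel (\<Union>q<M. F q)"
    by (intro sum_emeasure) auto
  moreover have "emeasure lborel (F q) = emeasure lborel (slab B k R c (1 / M))" for q
    unfolding F_def using emeasure_slab_translate[OF B] by metis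
  moreover have "(\<Union>q<M. F q) \<subseteq> slab B k R 0 1"
  proof
    fix y assume "y \<in> (\<Union>q<M. F q)"
    then obtain q where q: "q < M" "y \<in> F q" by auto
    have "real q / M + 1 / M \<le> 1" "0 \<le> real q / M" using q(1) M by (simp_all add: field_simps)
    moreover have "\<forall>i. i \<noteq> k \<longrightarrow> \<bar>(B *v y) $ i\<bar> \<le> R"
      "real q / M \<le> (B *v y) $ k" "(B *v y) $ k < real q / M + 1 / M"
      using q(2) by (auto simp: F_def slab_def)
    ultimately show "y \<in> slab B k R 0 1" unfolding slab_def by (intro CollectI conjI) (blast, linarith, linarith)
  qed
  then have "emeasure lborel (\<Union>q<M. F q) \<le> emeasure lborel (slab B k R 0 1)"
    by (intro emeasure_mono) auto
  ultimately show ?thesis by simp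
qed

lemma bounded_slab:
  fixes B :: "real^'n^'n"
  assumes "invertible B"
  shows "bounded (slab B k R c w)"
proof -
  define r where "r = max R (max \<bar>c\<bar> \<bar>c + w\<bar>)"
  have "slab B k R c w \<subseteq> (\<lambda>z. matrix_inv B *v z) ` cbox (- (\<chi> i. r)) (\<chi> i. r)"
  proof
    fix y assume y: "y \<in> slab B k R c w"
    have "y = matrix_inv B *v (B *v y)"
      by (simp add: matrix_vector_mul_assoc matrix_inv_mult[OF assms])
    moreover have "\<bar>(B *v y) $ i\<bar> \<le> r" for i
      using y by (cases "i = k") (auto simp: slab_def r_def)
    then have "B *v y \<in> cbox (- (\<chi> i. r)) (\<chi> i. r)"
      by (simp add: mem_box_cart abs_le_iff minus_le_iff)
    ultimately show "y \<in> (\<lambda>z. matrix_inv B *v z) ` cbox (- (\<chi> i. r)) (\<chi> i. r)" by blast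
  qed
  moreover have "bounded ((\<lambda>z. matrix_inv B *v z) ` cbox (- (\<chi> i. r)) (\<chi> i. r))"
    by (intro bounded_linear_image bounded_cbox matrix_vector_mul_bounded_linear)
  ultimately show ?thesis using bounded_subset by blast
qed

lemma emeasure_slab_le:
  fixes B :: "real^'n^'n" and M :: nat
  assumes B: "invertible B" and M: "M > 0"
  shows "emeasure lborel (slab B k R c (1 / M)) \<le> ennreal (measure lborel (slab B k R 0 1) / M)"
proof -
  have fin: "emeasure lborel (slab B k R c' w) = ennreal (measure lborel (slab B k R c' w))" for c' w
    using emeasure_bounded_finite[OF bounded_slab[OF B], of k R c' w]
    by (intro emeasure_eq_ennreal_measure) auto
  have "ennreal (real M * measure lborel (slab B k R c (1 / M))) \<le> ennreal (measure lborel (slab B k R 0 1))"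
    using emeasure_slab_packing[OF B M, of k R c] unfolding fin
    by (simp add: ennreal_mult' ennreal_of_nat_eq_real_of_nat)
  then have "real M * measure lborel (slab B k R c (1 / M)) \<le> measure lborel (slab B k R 0 1)"
    by (simp add: ennreal_le_iff)
  then show ?thesis
    unfolding fin using M by (intro ennreal_leI) (simp add: field_simps)
qed

lemma curve_maximal_ge_integral:
  assumes t: "t > 0" and int: "integrable lborel (\<lambda>s. f (x - t *\<^sub>R \<gamma> s) * \<chi>' s)"
    and intL: "integrable lborel L" and le: "\<And>s. L s \<le> f (x - t *\<^sub>R \<gamma> s) * \<chi>' s"
  shows "ennreal (integral\<^sup>L lborel L) \<le> curve_maximal \<gamma> \<chi>' f x"
proof -
  have "integral\<^sup>L lborel L \<le> \<bar>LINT s|lborel. f (x - t *\<^sub>R \<gamma> s) * \<chi>' s\<bar>"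
    using integral_mono[OF intL int le] by linarith
  then have "ennreal (integral\<^sup>L lborel L) \<le> ennreal \<bar>LINT s|lborel. f (x - t *\<^sub>R \<gamma> s) * \<chi>' s\<bar>"
    by (rule ennreal_leI)
  also have "\<dots> \<le> curve_maximal \<gamma> \<chi>' f x"
    unfolding curve_maximal_def using t by (intro SUP_upper) auto
  finally show ?thesis .
qed

lemma integrable_curve_average:
  fixes \<gamma> :: "real \<Rightarrow> real^'n" and f :: "real^'n \<Rightarrow> real"
  assumes f: "f \<in> borel_measurable borel" "\<And>y. \<bar>f y\<bar> \<le> K"
    and chi: "\<chi>' \<in> borel_measurable borel" "integrable lborel \<chi>'"
    and S: "open S" "continuous_on S \<gamma>" "\<And>s. s \<notin> S \<Longrightarrow> \<chi>' s = 0"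
  shows "integrable lborel (\<lambda>s. f (x - t *\<^sub>R \<gamma> s) * \<chi>' s)"
proof (rule Bochner_Integration.integrable_bound)
  show "integrable lborel (\<lambda>s. K * \<chi>' s)" using chi(2) by simp
  define \<gamma>' where "\<gamma>' s = (if s \<in> S then \<gamma> s else 0)" for s
  have [measurable]: "\<gamma>' \<in> borel_measurable borel"
    unfolding \<gamma>'_def using S by (intro borel_measurable_continuous_on_if) auto
  have "(\<lambda>s. f (x - t *\<^sub>R \<gamma> s) * \<chi>' s) = (\<lambda>s. f (x - t *\<^sub>R \<gamma>' s) * \<chi>' s)"
    using S(3) by (auto simp: \<gamma>'_def fun_eq_iff)
  then show "(\<lambda>s. f (x - t *\<^sub>R \<gamma> s) * \<chi>' s) \<in> borel_measurable lborel"
    using f(1) chi(1) by simp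
  show "AE s in lborel. norm (f (x - t *\<^sub>R \<gamma> s) * \<chi>' s) \<le> norm (K * \<chi>' s)"
  proof (intro AE_I2)
    fix s
    have "\<bar>f (x - t *\<^sub>R \<gamma> s)\<bar> \<le> \<bar>K\<bar>" using f(2) abs_ge_self order_trans by blast
    then show "norm (f (x - t *\<^sub>R \<gamma> s) * \<chi>' s) \<le> norm (K * \<chi>' s)"
      by (simp add: abs_mult mult_right_mono)
  qed
qed

lemma ennreal_powr_le_enn_powr:
  assumes "ennreal a \<le> x" "0 \<le> a" "0 \<le> p"
  shows "ennreal (a powr p) \<le> enn_powr x p"
proof (cases x rule: ennreal_cases)
  case (real b)
  then have "a \<le> b" using assms(1) by simp
  then show ?thesis using real assms(2,3) by (simp add: enn_powr_def powr_mono2)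
qed (simp add: enn_powr_def)

lemma has_bochner_integral_dyadic_intervals:
  fixes \<rho> :: real
  assumes "\<rho> > 0"
  shows "has_bochner_integral lborel
    (\<lambda>s. \<Sum>k\<le>N. 2 ^ k * indicator {s0 - \<rho> / 2 ^ k .. s0 + \<rho> / 2 ^ k} s) (2 * \<rho> * (real N + 1))"
proof -
  have "has_bochner_integral lborel (\<lambda>s. 2 ^ k * indicator {s0 - \<rho> / 2 ^ k .. s0 + \<rho> / 2 ^ k} s) (2 * \<rho>)"
    for k :: nat
  proof -
    have "has_bochner_integral lborel (indicator {s0 - \<rho> / 2 ^ k .. s0 + \<rho> / 2 ^ k})
        (measure lborel {s0 - \<rho> / 2 ^ k .. s0 + \<rho> / 2 ^ k})"
      by (intro has_bochner_integral_real_indicator emeasure_bounded_finite) auto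
    moreover have "measure lborel {s0 - \<rho> / 2 ^ k .. s0 + \<rho> / 2 ^ k} = 2 * \<rho> / 2 ^ k"
      using assms by (subst measure_lborel_Icc) auto
    ultimately have "has_bochner_integral lborel (indicator {s0 - \<rho> / 2 ^ k .. s0 + \<rho> / 2 ^ k}) (2 * \<rho> / 2 ^ k)"
      by simp
    from has_bochner_integral_mult_right[OF this, of "2 ^ k"] show ?thesis by simp
  qed
  then show ?thesis
    using has_bochner_integral_sum[of "{..N}" lborel
        "\<lambda>k s. 2 ^ k * indicator {s0 - \<rho> / 2 ^ k .. s0 + \<rho> / 2 ^ k} s" "\<lambda>_. 2 * \<rho>"]
    by (simp add: algebra_simps)
qed

lemma powr_sum_pow2_downclosed_le:
  fixes p :: real and P :: "nat \<Rightarrow> bool"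
  assumes p: "p \<ge> 0" and down: "\<And>k j. P k \<Longrightarrow> j \<le> k \<Longrightarrow> P j"
  shows "(\<Sum>k\<le>N. 2 ^ k * of_bool (P k)) powr p \<le> (\<Sum>k\<le>N. 2 powr (real (k + 1) * p) * of_bool (P k))"
proof (cases "\<exists>k\<le>N. P k")
  case False
  then show ?thesis by (simp add: sum_nonneg)
next
  case True
  define M where "M = Max {k. k \<le> N \<and> P k}"
  have M: "M \<le> N" "P M" and M_max: "\<And>k. k \<le> N \<Longrightarrow> P k \<Longrightarrow> k \<le> M"
    using True Max_in[of "{k. k \<le> N \<and> P k}"] by (auto simp: M_def)
  have "(\<Sum>k\<le>N. (2::real) ^ k * of_bool (P k)) = (\<Sum>k\<le>M. 2 ^ k)"
  proof -
    have "(\<Sum>k\<le>N. (2::real) ^ k * of_bool (P k)) = (\<Sum>k\<le>N. if P k then 2 ^ k else 0)"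
      by (intro sum.cong) auto
    also have "\<dots> = (\<Sum>k\<in>{k\<in>{..N}. P k}. 2 ^ k)"
      by (rule sum.inter_filter[symmetric]) simp
    also have "{k\<in>{..N}. P k} = {..M}"
      using M M_max down by auto
    finally show ?thesis .
  qed
  also have "(\<Sum>k\<le>M. (2::real) ^ k) \<le> 2 ^ (M + 1)"
    by (induction M) auto
  finally have "(\<Sum>k\<le>N. (2::real) ^ k * of_bool (P k)) powr p \<le> (2 ^ (M + 1)) powr p"
    by (intro powr_mono2 p sum_nonneg) auto
  also have "(2 ^ (M + 1) :: real) powr p = 2 powr (real (M + 1) * p)"
  proof -
    have "(2 ^ (M + 1) :: real) = 2 powr real (M + 1)" by (rule powr_realpow[symmetric]) simp
    then show ?thesis by (simp only: powr_powr)
  qed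
  also have "\<dots> \<le> (\<Sum>k\<le>N. 2 powr (real (k + 1) * p) * of_bool (P k))"
    using member_le_sum[of M "{..N}" "\<lambda>k. 2 powr (real (k + 1) * p) * of_bool (P k)"] M by auto
  finally show ?thesis .
qed

lemma powr_growth_not_dominated:
  fixes c K p :: real and d :: nat
  assumes c: "c > 0" and p: "1 \<le> p" "p \<le> real d" and d: "d \<ge> 2"
  shows "\<exists>N::nat. K * (\<Sum>k\<le>N. 2 powr (real k * (p - real d))) < c * (real N + 1) powr p"
proof (cases "p < real d")
  case True
  define q where "q = (2::real) powr (p - real d)"
  have q: "0 < q" "q < 1" using True by (auto simp: q_def powr_less_one)
  have geometric: "(\<Sum>k\<le>N. 2 powr (real k * (p - real d))) \<le> 1 / (1 - q)" for N
  proof -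
    have "2 powr (real k * (p - real d)) = q ^ k" for k
      unfolding q_def by (simp add: powr_realpow[symmetric] powr_powr mult.commute)
    then have "(\<Sum>k\<le>N. 2 powr (real k * (p - real d))) = (\<Sum>k<Suc N. q ^ k)"
      by (simp add: lessThan_Suc_atMost)
    also have "\<dots> = (1 - q ^ Suc N) / (1 - q)" using q by (subst sum_gp_strict) simp
    also have "\<dots> \<le> 1 / (1 - q)" using q by (intro divide_right_mono) auto
    finally show ?thesis .
  qed
  obtain N :: nat where N: "real N > max 0 K / (c * (1 - q))" using reals_Archimedean2 by blast
  have "K * (\<Sum>k\<le>N. 2 powr (real k * (p - real d))) \<le> max 0 K * (1 / (1 - q))"
    using geometric[of N] by (intro mult_mono) (auto intro: sum_nonneg)
  also have "\<dots> < c * real N" using N c q by (simp add: field_simps)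
  also have "\<dots> \<le> c * (real N + 1) powr 1" using c by simp
  also have "\<dots> \<le> c * (real N + 1) powr p" using c p by (intro mult_left_mono powr_mono) auto
  finally show ?thesis by blast
next
  case False
  then have pd: "p = real d" using p by simp
  obtain N :: nat where N: "real N > max 0 K / c" using reals_Archimedean2 by blast
  have "K * (\<Sum>k\<le>N. 2 powr (real k * (p - real d))) = K * (real N + 1)" by (simp add: pd)
  also have "\<dots> \<le> max 0 K * (real N + 1)" by (intro mult_right_mono) auto
  also have "\<dots> < c * (real N + 1) * (real N + 1)"
  proof (intro mult_strict_right_mono)
    show "max 0 K < c * (real N + 1)" using N c by (simp add: field_simps)
  qed simp
  also have "\<dots> = c * (real N + 1) powr 2" by (simp add: power2_eq_square powr_numeral)
  also have "\<dots> \<le> c * (real N + 1) powr p" using c p d pd by (intro mult_left_mono powr_mono) auto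
  finally show ?thesis by blast
qed

lemma exists_ball_coordinate_window:
  fixes B :: "real^'n^'n"
  assumes B: "invertible B" and \<alpha>: "\<alpha> \<noteq> 0"
  obtains y0 e where "e > 0" "\<And>x. x \<in> ball y0 e \<Longrightarrow>
    1 < (B *v x) $ k / \<alpha> \<and> (B *v x) $ k / \<alpha> < 2 \<and> (\<forall>i. i \<noteq> k \<longrightarrow> \<bar>(B *v x) $ i\<bar> < 1)"
proof -
  define z0 :: "real^'n" where "z0 = (\<chi> i. if i = k then 3/2 * \<alpha> else 0)"
  obtain L where L: "L > 0" "\<And>h. norm (B *v h) \<le> norm h * L"
    using bounded_linear.pos_bounded[OF matrix_vector_mul_bounded_linear[of B]] by blast
  define e where "e = min 1 (\<bar>\<alpha>\<bar> / 2) / L"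
  have "1 < (B *v x) $ k / \<alpha> \<and> (B *v x) $ k / \<alpha> < 2 \<and> (\<forall>i. i \<noteq> k \<longrightarrow> \<bar>(B *v x) $ i\<bar> < 1)"
    if x: "x \<in> ball (matrix_inv B *v z0) e" for x
  proof -
    have "norm (B *v x - z0) = norm (B *v (x - matrix_inv B *v z0))"
      by (simp add: matrix_vector_mult_diff_distrib matrix_vector_mul_assoc matrix_inv_mult[OF B])
    also have "\<dots> \<le> norm (x - matrix_inv B *v z0) * L" by (rule L(2))
    also have "\<dots> < e * L" using x L(1) by (simp add: dist_norm norm_minus_commute)
    finally have "norm (B *v x - z0) < min 1 (\<bar>\<alpha>\<bar> / 2)" using L(1) by (simp add: e_def)
    then have comp: "\<bar>(B *v x) $ i - z0 $ i\<bar> < min 1 (\<bar>\<alpha>\<bar> / 2)" for i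
      using component_le_norm_cart[of "B *v x - z0" i] by simp
    have "\<bar>(B *v x) $ k / \<alpha> - 3/2\<bar> = \<bar>(B *v x) $ k - 3/2 * \<alpha>\<bar> / \<bar>\<alpha>\<bar>"
      using \<alpha> by (simp add: diff_divide_distrib abs_divide[symmetric])
    also have "\<dots> < 1/2"
      using comp[of k] \<alpha> by (simp add: z0_def divide_less_eq)
    finally have "\<bar>(B *v x) $ k / \<alpha> - 3/2\<bar> < 1/2" .
    then have "1 < (B *v x) $ k / \<alpha>" "(B *v x) $ k / \<alpha> < 2" by linarith+
    moreover have "\<bar>(B *v x) $ i\<bar> < 1" if "i \<noteq> k" for i
      using comp[of i] that by (simp add: z0_def)
    ultimately show ?thesis by blast
  qed
  moreover have "e > 0" using L \<alpha> by (simp add: e_def)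
  ultimately show ?thesis using that by blast
qed

locale flat_curve_frame =
  fixes \<gamma> :: "real \<Rightarrow> real^'n" and \<chi>' :: "real \<Rightarrow> real" and S :: "real set"
    and B :: "real^'n^'n" and k0 :: 'n and \<alpha> s0 \<rho> m K :: real and d :: nat
  assumes invertible_B: "invertible B"
    and \<alpha>_nonzero: "\<alpha> \<noteq> 0" and \<rho>_pos: "\<rho> > 0" and m_pos: "m > 0" and K_nonneg: "K \<ge> 0"
    and contact_small: "2 * K * \<rho> ^ d < 1"
    and cball_subset: "cball s0 \<rho> \<subseteq> S"
    and chi_lower: "\<And>s. s \<in> cball s0 \<rho> \<Longrightarrow> m \<le> \<chi>' s"
    and flat: "\<And>s. s \<in> cball s0 \<rho> \<Longrightarrow> \<bar>(B *v \<gamma> s) $ k0 - \<alpha>\<bar> \<le> K * \<bar>s - s0\<bar> ^ d"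
    and chi_nonneg: "\<And>s. 0 \<le> \<chi>' s"
    and chi_borel: "\<chi>' \<in> borel_measurable borel"
    and chi_integrable: "integrable lborel \<chi>'"
    and open_S: "open S" and continuous_\<gamma>: "continuous_on S \<gamma>"
    and chi_outside: "\<And>s. s \<notin> S \<Longrightarrow> \<chi>' s = 0"
begin

definition width :: "nat \<Rightarrow> real" where
  "width k = (1/2) ^ (d * k)"

(* The points x - t gamma(s) with |s - s0| <= rho / 2^k all lie in knapp_set R k, whose measure is
   only O(2^(-d k)). *)
definition knapp_set :: "real \<Rightarrow> nat \<Rightarrow> (real^'n) set" where
  "knapp_set R k = slab B k0 R (- width k) (2 * width k)"

definition knapp_fun :: "real \<Rightarrow> nat \<Rightarrow> real^'n \<Rightarrow> real" where
  "knapp_fun R N y = (\<Sum>k\<le>N. 2 ^ k * indicator (knapp_set R k) y)"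

lemma knapp_fun_borel [measurable]: "knapp_fun R N \<in> borel_measurable borel"
  unfolding knapp_fun_def knapp_set_def by measurable

lemma knapp_set_antimono:
  assumes "j \<le> k"
  shows "knapp_set R k \<subseteq> knapp_set R j"
proof -
  have "width k \<le> width j"
    unfolding width_def using assms by (intro power_decreasing) auto
  then show ?thesis unfolding knapp_set_def slab_def by auto
qed

lemma knapp_fun_nonneg: "0 \<le> knapp_fun R N y"
  unfolding knapp_fun_def by (intro sum_nonneg) simp

lemma knapp_fun_le: "knapp_fun R N y \<le> (\<Sum>k\<le>N. 2 ^ k)"
  unfolding knapp_fun_def by (intro sum_mono) (simp add: indicator_def)

lemma curve_coordinates_bounded:
  obtains \<Gamma> where "\<And>s i. s \<in> cball s0 \<rho> \<Longrightarrow> \<bar>(B *v \<gamma> s) $ i\<bar> \<le> \<Gamma>"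
proof -
  have "continuous_on (cball s0 \<rho>) (\<lambda>s. B *v \<gamma> s)"
    by (intro continuous_on_compose2[OF matrix_vector_mult_linear_continuous_on _ subset_UNIV]
        continuous_on_subset[OF continuous_\<gamma> cball_subset])
  then have "bounded ((\<lambda>s. B *v \<gamma> s) ` cball s0 \<rho>)"
    by (intro compact_imp_bounded compact_continuous_image) auto
  then obtain \<Gamma> where "\<forall>s\<in>cball s0 \<rho>. norm (B *v \<gamma> s) \<le> \<Gamma>"
    unfolding bounded_iff by auto
  then show ?thesis
    by (meson that component_le_norm_cart order_trans)
qed

lemma curve_shift_in_knapp_set:
  assumes t: "1 < t" "t < 2" and x: "(B *v x) $ k0 = t * \<alpha>" "\<And>i. i \<noteq> k0 \<Longrightarrow> \<bar>(B *v x) $ i\<bar> < 1"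
    and s: "\<bar>s - s0\<bar> \<le> \<rho> / 2 ^ k"
    and \<Gamma>: "\<And>s i. s \<in> cball s0 \<rho> \<Longrightarrow> \<bar>(B *v \<gamma> s) $ i\<bar> \<le> \<Gamma>"
  shows "x - t *\<^sub>R \<gamma> s \<in> knapp_set (1 + 2 * \<Gamma>) k"
proof -
  have "\<rho> / 2 ^ k \<le> \<rho>" using \<rho>_pos by (simp add: field_simps)
  then have sc: "s \<in> cball s0 \<rho>" using s by (simp add: dist_real_def abs_minus_commute)
  have Bv: "B *v (x - t *\<^sub>R \<gamma> s) = B *v x - t *\<^sub>R (B *v \<gamma> s)"
    by (simp add: matrix_vector_mult_diff_distrib matrix_vector_mult_scaleR)
  have other: "\<bar>(B *v (x - t *\<^sub>R \<gamma> s)) $ i\<bar> \<le> 1 + 2 * \<Gamma>" if "i \<noteq> k0" for i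
  proof -
    have "\<bar>(B *v (x - t *\<^sub>R \<gamma> s)) $ i\<bar> \<le> \<bar>(B *v x) $ i\<bar> + t * \<bar>(B *v \<gamma> s) $ i\<bar>"
      using t abs_triangle_ineq4[of "(B *v x) $ i" "t * (B *v \<gamma> s) $ i"] by (simp add: Bv abs_mult)
    also have "\<dots> \<le> 1 + 2 * \<Gamma>"
      using x(2)[OF that] \<Gamma>[OF sc, of i] t by (intro add_mono mult_mono) auto
    finally show ?thesis .
  qed
  have "(B *v (x - t *\<^sub>R \<gamma> s)) $ k0 = t * (\<alpha> - (B *v \<gamma> s) $ k0)"
    by (simp add: Bv x(1) algebra_simps)
  then have "\<bar>(B *v (x - t *\<^sub>R \<gamma> s)) $ k0\<bar> = t * \<bar>(B *v \<gamma> s) $ k0 - \<alpha>\<bar>"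
    using t by (simp add: abs_mult abs_minus_commute)
  also have "\<dots> \<le> 2 * (K * (\<rho> / 2 ^ k) ^ d)"
  proof -
    have "K * \<bar>s - s0\<bar> ^ d \<le> K * (\<rho> / 2 ^ k) ^ d"
      using s K_nonneg by (intro mult_left_mono power_mono) auto
    then have "\<bar>(B *v \<gamma> s) $ k0 - \<alpha>\<bar> \<le> K * (\<rho> / 2 ^ k) ^ d"
      using flat[OF sc] by linarith
    then show ?thesis using t by (intro mult_mono) auto
  qed
  also have "\<dots> = (2 * K * \<rho> ^ d) * width k"
    by (simp add: width_def power_divide power_mult[symmetric] mult.commute power_one_over)
  also have "\<dots> < width k"
    using contact_small by (simp add: width_def)
  finally show ?thesis
    using other by (auto simp: knapp_set_def slab_def)
qed

lemma dyadic_plateaus_le_knapp_average: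
  assumes t: "1 < t" "t < 2" and x: "(B *v x) $ k0 = t * \<alpha>" "\<And>i. i \<noteq> k0 \<Longrightarrow> \<bar>(B *v x) $ i\<bar> < 1"
    and \<Gamma>: "\<And>s i. s \<in> cball s0 \<rho> \<Longrightarrow> \<bar>(B *v \<gamma> s) $ i\<bar> \<le> \<Gamma>"
  shows "m * (\<Sum>k\<le>N. 2 ^ k * indicator {s0 - \<rho> / 2 ^ k .. s0 + \<rho> / 2 ^ k} s)
    \<le> knapp_fun (1 + 2 * \<Gamma>) N (x - t *\<^sub>R \<gamma> s) * \<chi>' s"
proof -
  have "m * indicator {s0 - \<rho> / 2 ^ k .. s0 + \<rho> / 2 ^ k} s
      \<le> indicator (knapp_set (1 + 2 * \<Gamma>) k) (x - t *\<^sub>R \<gamma> s) * \<chi>' s" for k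
  proof (cases "s \<in> {s0 - \<rho> / 2 ^ k .. s0 + \<rho> / 2 ^ k}")
    case True
    then have "\<bar>s - s0\<bar> \<le> \<rho> / 2 ^ k" by auto
    moreover have "\<rho> / 2 ^ k \<le> \<rho>" using \<rho>_pos by (simp add: field_simps)
    ultimately have "m \<le> \<chi>' s" "x - t *\<^sub>R \<gamma> s \<in> knapp_set (1 + 2 * \<Gamma>) k"
      using chi_lower curve_shift_in_knapp_set[OF t x _ \<Gamma>]
      by (auto simp: dist_real_def abs_minus_commute)
    then show ?thesis using True by simp
  qed (simp add: chi_nonneg)
  then show ?thesis
    unfolding knapp_fun_def sum_distrib_left sum_distrib_right
    by (intro sum_mono) (simp add: mult_ac mult_left_mono)
qed

lemma curve_maximal_knapp_fun_lower:
  obtains R y0 e where "e > 0"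
    "\<And>N x. x \<in> ball y0 e \<Longrightarrow> ennreal (m * (2 * \<rho> * (real N + 1))) \<le> curve_maximal \<gamma> \<chi>' (knapp_fun R N) x"
proof -
  obtain \<Gamma> where \<Gamma>: "\<And>s i. s \<in> cball s0 \<rho> \<Longrightarrow> \<bar>(B *v \<gamma> s) $ i\<bar> \<le> \<Gamma>"
    using curve_coordinates_bounded by blast
  obtain y0 e where e: "e > 0" and window: "\<And>x. x \<in> ball y0 e \<Longrightarrow>
      1 < (B *v x) $ k0 / \<alpha> \<and> (B *v x) $ k0 / \<alpha> < 2 \<and> (\<forall>i. i \<noteq> k0 \<longrightarrow> \<bar>(B *v x) $ i\<bar> < 1)"
    by (metis exists_ball_coordinate_window[OF invertible_B \<alpha>_nonzero])
  have "ennreal (m * (2 * \<rho> * (real N + 1))) \<le> curve_maximal \<gamma> \<chi>' (knapp_fun (1 + 2 * \<Gamma>) N) x"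
    if x: "x \<in> ball y0 e" for N x
  proof -
    define t where "t = (B *v x) $ k0 / \<alpha>"
    have t: "1 < t" "t < 2" and others: "\<And>i. i \<noteq> k0 \<Longrightarrow> \<bar>(B *v x) $ i\<bar> < 1"
      using window[OF x] by (auto simp: t_def)
    have xk0: "(B *v x) $ k0 = t * \<alpha>" using \<alpha>_nonzero by (simp add: t_def)
    define L where "L s = m * (\<Sum>k\<le>N. 2 ^ k * indicator {s0 - \<rho> / 2 ^ k .. s0 + \<rho> / 2 ^ k} s)" for s
    have L: "has_bochner_integral lborel L (m * (2 * \<rho> * (real N + 1)))"
      unfolding L_def by (intro has_bochner_integral_mult_right has_bochner_integral_dyadic_intervals \<rho>_pos)
    have "integrable lborel (\<lambda>s. knapp_fun (1 + 2 * \<Gamma>) N (x - t *\<^sub>R \<gamma> s) * \<chi>' s)"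
      using knapp_fun_nonneg knapp_fun_le order_trans[OF abs_ge_self]
      by (intro integrable_curve_average[OF _ _ chi_borel chi_integrable open_S continuous_\<gamma> chi_outside]) auto
    then have "ennreal (integral\<^sup>L lborel L) \<le> curve_maximal \<gamma> \<chi>' (knapp_fun (1 + 2 * \<Gamma>) N) x"
      using t integrable.intros[OF L] dyadic_plateaus_le_knapp_average[OF t xk0 others \<Gamma>]
      by (intro curve_maximal_ge_integral) (auto simp: L_def)
    then show ?thesis using has_bochner_integral_integral_eq[OF L] by simp
  qed
  with e show ?thesis using that by blast
qed

lemma nn_integral_maximal_knapp_fun_lower:
  assumes p: "p \<ge> 0"
  obtains R c where "c > 0"
    "\<And>N. ennreal (c * (real N + 1) powr p) \<le> (\<integral>\<^sup>+ x. enn_powr (curve_maximal \<gamma> \<chi>' (knapp_fun R N) x) p \<partial>lborel)"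
proof -
  obtain R y0 e where e: "e > 0" and lower: "\<And>N x. x \<in> ball y0 e \<Longrightarrow>
      ennreal (m * (2 * \<rho> * (real N + 1))) \<le> curve_maximal \<gamma> \<chi>' (knapp_fun R N) x"
    by (metis curve_maximal_knapp_fun_lower)
  define vol where "vol = measure lborel (ball y0 e)"
  have vol: "vol > 0" "emeasure lborel (ball y0 e) = ennreal vol"
    using e content_ball_pos[of e y0] emeasure_bounded_finite[OF bounded_ball, of y0 e]
    by (auto simp: vol_def intro: emeasure_eq_ennreal_measure)
  define c where "c = (m * (2 * \<rho>)) powr p * vol"
  have "ennreal (c * (real N + 1) powr p) \<le> (\<integral>\<^sup>+ x. enn_powr (curve_maximal \<gamma> \<chi>' (knapp_fun R N) x) p \<partial>lborel)"
    for N
  proof -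
    define V where "V = m * (2 * \<rho>) * (real N + 1)"
    have "V \<ge> 0" using m_pos \<rho>_pos by (simp add: V_def)
    have "V powr p * vol = c * (real N + 1) powr p"
      unfolding V_def c_def using m_pos \<rho>_pos by (simp add: powr_mult)
    then have "ennreal (c * (real N + 1) powr p) = ennreal (V powr p) * emeasure lborel (ball y0 e)"
      using vol by (simp flip: ennreal_mult)
    also have "\<dots> = (\<integral>\<^sup>+ x. ennreal (V powr p) * indicator (ball y0 e) x \<partial>lborel)"
      by (simp add: nn_integral_cmult_indicator)
    also have "\<dots> \<le> (\<integral>\<^sup>+ x. enn_powr (curve_maximal \<gamma> \<chi>' (knapp_fun R N) x) p \<partial>lborel)"
    proof (rule nn_integral_mono)
      fix x
      show "ennreal (V powr p) * indicator (ball y0 e) x \<le> enn_powr (curve_maximal \<gamma> \<chi>' (knapp_fun R N) x) p"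
      proof (cases "x \<in> ball y0 e")
        case True
        have "ennreal V \<le> curve_maximal \<gamma> \<chi>' (knapp_fun R N) x"
          using lower[OF True, of N] by (simp add: V_def mult.assoc)
        then show ?thesis
          using ennreal_powr_le_enn_powr[OF _ \<open>V \<ge> 0\<close>] p True by simp
      qed simp
    qed
    finally show ?thesis .
  qed
  moreover have "c > 0" using m_pos \<rho>_pos vol by (simp add: c_def)
  ultimately show ?thesis using that by blast
qed

lemma emeasure_knapp_set_finite: "emeasure lborel (knapp_set R k) < \<infinity>"
  unfolding knapp_set_def by (intro emeasure_bounded_finite bounded_slab invertible_B)

lemma measure_knapp_set_le:
  "measure lborel (knapp_set R k) \<le> 2 * measure lborel (slab B k0 R 0 1) * width k"
proof -
  define M :: nat where "M = 2 ^ (d * k)"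
  have M: "M > 0" and w: "width k = 1 / M"
    by (simp_all add: M_def width_def power_one_over)
  have "knapp_set R k \<subseteq> slab B k0 R (- width k) (1 / M) \<union> slab B k0 R 0 (1 / M)"
    by (auto simp: knapp_set_def slab_def w)
  then have "emeasure lborel (knapp_set R k)
      \<le> emeasure lborel (slab B k0 R (- width k) (1 / M)) + emeasure lborel (slab B k0 R 0 (1 / M))"
    by (intro order_trans[OF emeasure_mono emeasure_subadditive]) auto
  also have "\<dots> \<le> ennreal (measure lborel (slab B k0 R 0 1) / M) + ennreal (measure lborel (slab B k0 R 0 1) / M)"
    by (intro add_mono emeasure_slab_le invertible_B M)
  also have "\<dots> = ennreal (2 * measure lborel (slab B k0 R 0 1) * width k)"
    by (simp add: w ennreal_plus[symmetric] del: ennreal_plus)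
  also have "emeasure lborel (knapp_set R k) = ennreal (measure lborel (knapp_set R k))"
    using emeasure_knapp_set_finite[of R k] by (intro emeasure_eq_ennreal_measure) auto
  finally show ?thesis
    by (subst (asm) ennreal_le_iff) (auto simp: width_def)
qed

lemma powr_mult_width: "2 powr (real (k + 1) * p) * width k = 2 powr p * 2 powr (real k * (p - real d))"
proof -
  have "(2::real) ^ (d * k) = 2 powr real (d * k)" by (rule powr_realpow[symmetric]) simp
  then have "width k = 2 powr (- real (d * k))"
    by (simp add: width_def power_one_over powr_minus_divide)
  then show ?thesis
    by (simp add: powr_add[symmetric] algebra_simps)
qed

lemma knapp_fun_powr_le:
  assumes "p \<ge> 0"
  shows "\<bar>knapp_fun R N y\<bar> powr p \<le> (\<Sum>k\<le>N. 2 powr (real (k + 1) * p) * indicator (knapp_set R k) y)"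
proof -
  have "knapp_fun R N y = (\<Sum>k\<le>N. 2 ^ k * of_bool (y \<in> knapp_set R k))"
    by (simp add: knapp_fun_def indicator_def of_bool_def)
  moreover have "(\<Sum>k\<le>N. (2::real) ^ k * of_bool (y \<in> knapp_set R k)) powr p
      \<le> (\<Sum>k\<le>N. 2 powr (real (k + 1) * p) * of_bool (y \<in> knapp_set R k))"
    using assms knapp_set_antimono by (intro powr_sum_pow2_downclosed_le) auto
  ultimately show ?thesis
    using knapp_fun_nonneg[of R N y] by (simp add: indicator_def of_bool_def)
qed

lemma nn_integral_knapp_fun_powr_le:
  assumes p: "p \<ge> 0"
  shows "integrable lborel (\<lambda>y. \<bar>knapp_fun R N y\<bar> powr p)"
    and "(\<integral>\<^sup>+ y. ennreal (\<bar>knapp_fun R N y\<bar> powr p) \<partial>lborel)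
      \<le> ennreal (2 * measure lborel (slab B k0 R 0 1) * 2 powr p * (\<Sum>k\<le>N. 2 powr (real k * (p - real d))))"
proof -
  define g where "g y = (\<Sum>k\<le>N. 2 powr (real (k + 1) * p) * indicator (knapp_set R k) y)" for y
  have g: "has_bochner_integral lborel g (\<Sum>k\<le>N. 2 powr (real (k + 1) * p) * measure lborel (knapp_set R k))"
    unfolding g_def using emeasure_knapp_set_finite
    by (intro has_bochner_integral_sum has_bochner_integral_mult_right has_bochner_integral_real_indicator)
      (auto simp: knapp_set_def)
  have le: "\<bar>knapp_fun R N y\<bar> powr p \<le> g y" for y
    unfolding g_def by (rule knapp_fun_powr_le[OF p])
  show "integrable lborel (\<lambda>y. \<bar>knapp_fun R N y\<bar> powr p)"
    using le by (intro Bochner_Integration.integrable_bound[OF integrable.intros[OF g]])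
      (auto intro!: AE_I2 order_trans[OF _ abs_ge_self])
  have "(\<integral>\<^sup>+ y. ennreal (\<bar>knapp_fun R N y\<bar> powr p) \<partial>lborel) \<le> (\<integral>\<^sup>+ y. ennreal (g y) \<partial>lborel)"
    using le by (intro nn_integral_mono ennreal_leI)
  also have "\<dots> = ennreal (\<Sum>k\<le>N. 2 powr (real (k + 1) * p) * measure lborel (knapp_set R k))"
    using integrable.intros[OF g] order_trans[OF powr_ge_zero le] has_bochner_integral_integral_eq[OF g]
    by (subst nn_integral_eq_integral) (auto intro: AE_I2)
  also have "\<dots> \<le> ennreal (\<Sum>k\<le>N. 2 powr (real (k + 1) * p) * (2 * measure lborel (slab B k0 R 0 1) * width k))"
    by (intro ennreal_leI sum_mono mult_left_mono measure_knapp_set_le) auto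
  also have "(\<Sum>k\<le>N. 2 powr (real (k + 1) * p) * (2 * measure lborel (slab B k0 R 0 1) * width k))
      = 2 * measure lborel (slab B k0 R 0 1) * 2 powr p * (\<Sum>k\<le>N. 2 powr (real k * (p - real d)))"
  proof -
    have "2 powr (real (k + 1) * p) * (2 * measure lborel (slab B k0 R 0 1) * width k)
        = 2 * measure lborel (slab B k0 R 0 1) * 2 powr p * 2 powr (real k * (p - real d))" for k
      using powr_mult_width[of k p] by algebra
    then show ?thesis
      unfolding sum_distrib_left by (intro sum.cong) auto
  qed
  finally show "(\<integral>\<^sup>+ y. ennreal (\<bar>knapp_fun R N y\<bar> powr p) \<partial>lborel)
      \<le> ennreal (2 * measure lborel (slab B k0 R 0 1) * 2 powr p * (\<Sum>k\<le>N. 2 powr (real k * (p - real d))))" .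
qed

(* For the Knapp function f_N, M f_N is of order N on a fixed ball, so the left-hand side grows
   like N^p, whereas the integral of |f_N|^p is a partial sum of 2^(k (p - d)), which grows at
   most linearly in N. *)
theorem maximal_operator_unbounded:
  assumes p: "1 \<le> p" "p \<le> real d" and d: "d \<ge> 2"
  shows "\<not> (\<exists>C::real. \<forall>f :: real^'n \<Rightarrow> real.
            f \<in> borel_measurable lborel \<and> integrable lborel (\<lambda>x. \<bar>f x\<bar> powr p) \<longrightarrow>
            (\<integral>\<^sup>+ x. enn_powr (curve_maximal \<gamma> \<chi>' f x) p \<partial>lborel)
              \<le> ennreal C * (\<integral>\<^sup>+ x. ennreal (\<bar>f x\<bar> powr p) \<partial>lborel))"
    (is "\<not> (\<exists>C. ?bounded C)")
proof
  assume "\<exists>C. ?bounded C"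
  then obtain C where bound: "?bounded C" by blast
  obtain R c where c: "c > 0" and lower: "\<And>N. ennreal (c * (real N + 1) powr p)
      \<le> (\<integral>\<^sup>+ x. enn_powr (curve_maximal \<gamma> \<chi>' (knapp_fun R N) x) p \<partial>lborel)"
    using nn_integral_maximal_knapp_fun_lower p(1) by (metis order_trans zero_le_one)
  define \<mu> where "\<mu> = measure lborel (slab B k0 R 0 1)"
  define K' where "K' = max 0 C * (2 * \<mu> * 2 powr p)"
  obtain N where N: "K' * (\<Sum>k\<le>N. 2 powr (real k * (p - real d))) < c * (real N + 1) powr p"
    using powr_growth_not_dominated[OF c p d] by blast
  let ?S = "\<Sum>k\<le>N. 2 powr (real k * (p - real d))"
  have nonneg: "0 \<le> 2 * \<mu> * 2 powr p * ?S" by (auto simp: \<mu>_def intro!: sum_nonneg mult_nonneg_nonneg)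
  have "ennreal (c * (real N + 1) powr p) \<le> ennreal C * (\<integral>\<^sup>+ x. ennreal (\<bar>knapp_fun R N x\<bar> powr p) \<partial>lborel)"
    using lower[of N] bound[rule_format, of "knapp_fun R N"] p nn_integral_knapp_fun_powr_le(1)[of p R N]
    by auto
  also have "\<dots> \<le> ennreal (max 0 C) * ennreal (2 * \<mu> * 2 powr p * ?S)"
    using p nn_integral_knapp_fun_powr_le(2)[of p R N] unfolding \<mu>_def
    by (intro mult_mono ennreal_leI) auto
  also have "\<dots> = ennreal (K' * ?S)"
    using nonneg by (simp add: K'_def ennreal_mult[symmetric] mult_ac)
  finally have "c * (real N + 1) powr p \<le> K' * ?S"
    using mult_nonneg_nonneg[OF max.cobounded1[of 0 C] nonneg]
    by (subst (asm) ennreal_le_iff) (auto simp: K'_def mult_ac)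
  with N show False by linarith
qed

end

lemma cutoff_vanishes_outside:
  fixes \<chi>' :: "real \<Rightarrow> real"
  assumes "closure {s. \<chi>' s \<noteq> 0} \<subseteq> S" "s \<notin> S"
  shows "\<chi>' s = 0"
proof (rule ccontr)
  assume "\<chi>' s \<noteq> 0"
  then have "s \<in> closure {s. \<chi>' s \<noteq> 0}" by (intro closure_subset[THEN subsetD]) simp
  with assms show False by blast
qed

lemma integrable_cutoff:
  fixes \<chi>' :: "real \<Rightarrow> real"
  assumes "continuous_on UNIV \<chi>'" "closure {s. \<chi>' s \<noteq> 0} \<subseteq> {a<..<b}"
  shows "integrable lborel \<chi>'"
proof -
  have "integrable lborel (\<lambda>s. indicator {a..b} s *\<^sub>R \<chi>' s)"
    using assms(1) by (intro borel_integrable_compact continuous_on_subset[OF assms(1)]) auto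
  moreover have "(\<lambda>s. indicator {a..b} s *\<^sub>R \<chi>' s) = \<chi>'"
  proof
    fix s
    show "indicator {a..b} s *\<^sub>R \<chi>' s = \<chi>' s"
      using cutoff_vanishes_outside[OF assms(2), of s] by (cases "s \<in> {a..b}") auto
  qed
  ultimately show ?thesis by simp
qed

lemma exists_cutoff_plateau:
  fixes \<chi>' :: "real \<Rightarrow> real"
  assumes chi_cont: "continuous_on UNIV \<chi>'" and chi_nonneg: "\<forall>s. \<chi>' s \<ge> 0"
    and chi_nonzero: "\<exists>s. \<chi>' s \<noteq> 0" and chi_supp: "closure {s. \<chi>' s \<noteq> 0} \<subseteq> {a<..<b}"
  obtains J m where "open J" "J \<noteq> {}" "J \<subseteq> {a<..<b}" "m > 0" "\<And>s. s \<in> J \<Longrightarrow> m < \<chi>' s"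
proof -
  obtain s1 where "\<chi>' s1 \<noteq> 0" using chi_nonzero by blast
  then have s1: "\<chi>' s1 > 0" "s1 \<in> {a<..<b}"
    using chi_nonneg cutoff_vanishes_outside[OF chi_supp, of s1] by (auto simp: order_le_neq_trans)
  define J where "J = {a<..<b} \<inter> {s. \<chi>' s1 / 2 < \<chi>' s}"
  have "s1 \<in> J" using s1 by (simp add: J_def)
  moreover have "open J"
    unfolding J_def by (intro open_Int open_greaterThanLessThan open_Collect_less continuous_on_const chi_cont)
  ultimately show ?thesis
    using s1 by (intro that[of J "\<chi>' s1 / 2"]) (auto simp: J_def)
qed

lemma exists_radius_contact_small:
  fixes K r :: real
  assumes K: "K \<ge> 0" and r: "r > 0" and d: "d \<ge> 1"
  obtains \<rho> where "0 < \<rho>" "\<rho> \<le> r" "2 * K * \<rho> ^ d < 1"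
proof -
  define \<rho> where "\<rho> = min r (1 / (2 * (K + 1)))"
  have \<rho>: "0 < \<rho>" "\<rho> \<le> r" "\<rho> \<le> 1 / (2 * (K + 1))" "1 / (2 * (K + 1)) \<le> 1"
    using K r by (simp_all add: \<rho>_def field_simps)
  have "\<rho> \<le> 1" using \<rho>(3,4) by linarith
  then have "2 * K * \<rho> ^ d \<le> 2 * K * \<rho>"
    using \<rho>(1) d K by (intro mult_left_mono power_decreasing[of 1 d \<rho>, simplified]) auto
  also have "\<dots> \<le> 2 * K * (1 / (2 * (K + 1)))"
    using K \<rho>(3) by (intro mult_left_mono) auto
  also have "\<dots> < 1"
    using K by (simp add: field_simps)
  finally show ?thesis using that \<rho> by blast
qed

lemma exists_flat_frame_point:
  fixes \<gamma> :: "real \<Rightarrow> real^'n"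
  assumes n2: "CARD('n) \<ge> 2" and J: "open J" "J \<noteq> {}" "J \<subseteq> U"
    and smooth: "\<forall>k i. \<forall>x\<in>U. ((deriv ^^ k) (\<lambda>t. \<gamma> t $ i)) differentiable (at x)"
    and nondeg: "\<forall>s\<in>J. torsion_det \<gamma> s \<noteq> 0"
  obtains B :: "real^'n^'n" and s0 k0 r K
  where "invertible B" "(B *v \<gamma> s0) $ k0 \<noteq> 0" "r > 0" "cball s0 r \<subseteq> J" "K \<ge> 0"
    "\<And>s. s \<in> cball s0 r \<Longrightarrow> \<bar>(B *v \<gamma> s) $ k0 - (B *v \<gamma> s0) $ k0\<bar> \<le> K * \<bar>s - s0\<bar> ^ CARD('n)"
proof -
  let ?G = "deriv_frame (col_order :: 'n \<Rightarrow> nat) \<gamma>"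
  have "CARD('n) \<in> col_order ` (UNIV :: 'n set)"
    using col_order_bij[where 'n='n] n2 by (simp add: bij_betw_def)
  then obtain k0 :: 'n where k0: "col_order k0 = CARD('n)" by (metis imageE)
  have det: "\<forall>s\<in>J. det (?G s) \<noteq> 0"
    using nondeg by (simp add: torsion_det_eq)
  obtain s0 where s0: "s0 \<in> J" and \<alpha>: "(matrix_inv (?G s0) *v \<gamma> s0) $ k0 \<noteq> 0"
    using exists_top_frame_coordinate_nonzero[OF col_order_bij k0 J smooth det] by blast
  have inv: "invertible (?G s0)" using det s0 by (simp add: invertible_det_nz)
  obtain r where r: "r > 0" "cball s0 r \<subseteq> J" using J(1) s0 open_contains_cball by blast
  obtain K where K: "K \<ge> 0" "\<And>s. s \<in> cball s0 r \<Longrightarrow>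
      \<bar>(matrix_inv (?G s0) *v \<gamma> s) $ k0 - (matrix_inv (?G s0) *v \<gamma> s0) $ k0\<bar> \<le> K * \<bar>s - s0\<bar> ^ CARD('n)"
    using frame_top_coordinate_flat[OF col_order_bij k0 smooth _ matrix_inv_mult(2)[OF inv], of r] r J(3)
    by blast
  show ?thesis
    by (rule that[where B = "matrix_inv (?G s0)"]) (use invertible_matrix_inv[OF inv] \<alpha> r K in auto)
qed

lemma exists_flat_curve_frame:
  fixes \<gamma> :: "real \<Rightarrow> real^'n" and \<chi>' :: "real \<Rightarrow> real"
  assumes n2: "CARD('n) \<ge> 2"
    and U: "open U" "{a..b} \<subseteq> U"
    and smooth_gamma: "\<forall>k i. \<forall>x\<in>U. ((deriv ^^ k) (\<lambda>t. \<gamma> t $ i)) differentiable (at x)"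
    and nondeg: "\<forall>s\<in>{a..b}. torsion_det \<gamma> s \<noteq> 0"
    and chi_cont: "continuous_on UNIV \<chi>'"
    and chi_nonneg: "\<forall>s. \<chi>' s \<ge> 0"
    and chi_nonzero: "\<exists>s. \<chi>' s \<noteq> 0"
    and chi_supp: "closure {s. \<chi>' s \<noteq> 0} \<subseteq> {a<..<b}"
  obtains B k0 \<alpha> s0 \<rho> m K where "flat_curve_frame \<gamma> \<chi>' {a<..<b} B k0 \<alpha> s0 \<rho> m K CARD('n)"
proof -
  obtain J m where J: "open J" "J \<noteq> {}" "J \<subseteq> {a<..<b}" and m: "m > 0" "\<And>s. s \<in> J \<Longrightarrow> m < \<chi>' s"
    using exists_cutoff_plateau[OF chi_cont chi_nonneg chi_nonzero chi_supp] by metis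
  have "{a<..<b} \<subseteq> U" using U(2) by auto
  then have JU: "J \<subseteq> U" using J(3) by blast
  have "\<forall>s\<in>J. torsion_det \<gamma> s \<noteq> 0" using nondeg J(3) by auto
  then obtain B :: "real^'n^'n" and s0 k0 r K where frame: "invertible B" "(B *v \<gamma> s0) $ k0 \<noteq> 0"
      and r: "r > 0" "cball s0 r \<subseteq> J" and K: "K \<ge> 0"
      "\<And>s. s \<in> cball s0 r \<Longrightarrow> \<bar>(B *v \<gamma> s) $ k0 - (B *v \<gamma> s0) $ k0\<bar> \<le> K * \<bar>s - s0\<bar> ^ CARD('n)"
    using exists_flat_frame_point[OF n2 J(1,2) JU smooth_gamma] by metis
  obtain \<rho> where \<rho>: "0 < \<rho>" "\<rho> \<le> r" "2 * K * \<rho> ^ CARD('n) < 1"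
    using exists_radius_contact_small[OF K(1) r(1), of "CARD('n)"] n2 by auto
  have ball: "cball s0 \<rho> \<subseteq> J" using r(2) subset_cball[OF \<rho>(2)] by blast
  have "flat_curve_frame \<gamma> \<chi>' {a<..<b} B k0 ((B *v \<gamma> s0) $ k0) s0 \<rho> m K CARD('n)"
  proof
    show "cball s0 \<rho> \<subseteq> {a<..<b}" using ball J(3) by blast
    show "m \<le> \<chi>' s" if "s \<in> cball s0 \<rho>" for s using ball m(2) that by force
    show "\<bar>(B *v \<gamma> s) $ k0 - (B *v \<gamma> s0) $ k0\<bar> \<le> K * \<bar>s - s0\<bar> ^ CARD('n)" if "s \<in> cball s0 \<rho>" for s
      using K(2) subset_cball[OF \<rho>(2)] that by blast
    show "\<chi>' \<in> borel_measurable borel" using chi_cont by (rule borel_measurable_continuous_onI)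
    show "integrable lborel \<chi>'" using chi_cont chi_supp by (rule integrable_cutoff)
    show "continuous_on {a<..<b} \<gamma>"
      by (rule continuous_on_subset[OF continuous_on_curve[OF smooth_gamma]]) (use U(2) in auto)
    show "\<chi>' s = 0" if "s \<notin> {a<..<b}" for s
      using cutoff_vanishes_outside[OF chi_supp that] .
  qed (use frame \<rho> m K chi_nonneg in auto)
  then show ?thesis using that by blast
qed

theorem proposition12p1:
  fixes \<gamma> :: "real \<Rightarrow> real^'n" and \<chi>' :: "real \<Rightarrow> real"
    and a b c0 p :: real and U :: "real set"
  assumes n2: "CARD('n) \<ge> 2"
    and U: "open U" "{a..b} \<subseteq> U"
    and smooth_gamma: "\<forall>k i. \<forall>x\<in>U. ((deriv ^^ k) (\<lambda>t. \<gamma> t $ i)) differentiable (at x)"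
    and c0: "c0 > 0"
    and nondeg: "\<forall>s\<in>{a..b}. \<bar>torsion_det \<gamma> s\<bar> \<ge> c0"
    and smooth_chi: "\<forall>k x. ((deriv ^^ k) \<chi>') differentiable (at x)"
    and chi_nonneg: "\<forall>s. \<chi>' s \<ge> 0"
    and chi_nonzero: "\<exists>s. \<chi>' s \<noteq> 0"
    and chi_supp: "closure {s. \<chi>' s \<noteq> 0} \<subseteq> {a<..<b}"
    and p: "1 \<le> p" "p \<le> real CARD('n)"
  shows "\<not> (\<exists>C::real. \<forall>f :: real^'n \<Rightarrow> real.
            f \<in> borel_measurable lborel \<and> integrable lborel (\<lambda>x. \<bar>f x\<bar> powr p) \<longrightarrow>
            (\<integral>\<^sup>+ x. enn_powr (curve_maximal \<gamma> \<chi>' f x) p \<partial>lborel)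
              \<le> ennreal C * (\<integral>\<^sup>+ x. ennreal (\<bar>f x\<bar> powr p) \<partial>lborel))"
proof -
  have chi_cont: "continuous_on UNIV \<chi>'"
    using smooth_chi[rule_format, of 0]
    by (intro continuous_at_imp_continuous_on ballI differentiable_imp_continuous_within) auto
  have "\<forall>s\<in>{a..b}. torsion_det \<gamma> s \<noteq> 0"
    using nondeg c0 by fastforce
  then obtain B k0 \<alpha> s0 \<rho> m K where "flat_curve_frame \<gamma> \<chi>' {a<..<b} B k0 \<alpha> s0 \<rho> m K CARD('n)"
    using exists_flat_curve_frame[OF n2 U smooth_gamma _ chi_cont chi_nonneg chi_nonzero chi_supp] by metis
  then show ?thesis
    using flat_curve_frame.maximal_operator_unbounded[OF _ p n2] by blast
qed

end
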